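(* Let $d\ge2$ and $0<\delta\le 1$, and let $\mathcal{P}_\delta$ be the protection of the Delaunay triangulation of $T_\delta(\mathbb{Z}^d)$ and $R_\delta$ its Delaunay radius. Writing $N_\delta=\delta^4(d^2-1)+\delta^2(d^2+2)+d^2-1$, we have $$\frac{\mathcal{P}_\delta}{R_\delta}=\begin{cases}\sqrt{\dfrac{\delta^4(d^2-1)+\delta^2(d^2-22)+d^2+23}{N_\delta}}-1 & \text{if } \frac{1}{\sqrt{d+1}}<\delta\le1,\\[2mm] \sqrt{\dfrac{d^2+2d+24}{d^2+2d}}-1 & \text{if } \delta=\frac{1}{\sqrt{d+1}},\\[2mm] \sqrt{\dfrac{\delta^4(d^2-1)+\delta^2(d^2+24d+2)+d^2-1}{N_\delta}}-1 & \text{if } 0<\delta<\frac{1}{\sqrt{d+1}}.\end{cases}$$ Moreover $R_\delta=\sqrt{N_\delta/(12d)}$.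
   Context: For $\delta\in\mathbb{R}$ the diagonal distortion $T_\delta:\mathbb{R}^d\to\mathbb{R}^d$ is $T_\delta(x)=x-\frac{1-\delta}{d}\,\Delta(x)\,\mathbf{1}$, with $\Delta(x)=\sum_i x_i$, $\mathbf{1}=(1,\dots,1)$. The Freudenthal triangulation of $[0,1]^d$ consists of the simplices whose vertex sets are chains $p_0\le p_1\le\dots\le p_k$ in $\{0,1\}^d$ (coordinatewise strictly increasing); translating it by all integer vectors gives a triangulation of $\mathbb{R}^d$ with vertex set $\mathbb{Z}^d$. For $0<\delta\le 1$ the Delaunay triangulation of $T_\delta(\mathbb{Z}^d)$ is (for $\delta<1$) the image under $T_\delta$ of this triangulation; all its $d$-simplices are congruent and have the same circumradius, the Delaunay radius $R_\delta$ (for $\delta=1$ take the $T_1$-image of the same Freudenthal simplices, i.e. the Freudenthal simplices themselves). For a Delaunay $d$-simplex $\tau$ with circumcenter $c_\tau$ and circumradius $r_\tau$, its protection is $\min\{\|q-c_\tau\|-r_\tau : q\in T_\delta(\mathbb{Z}^d)\text{ not a vertex of }\tau\}$; the protection $\mathcal{P}_\delta$ of the lattice is the infimum of this over all Delaunay $d$-simplices $\tau$. *)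

theory Defs
  imports "HOL-Analysis.Analysis"
begin

text \<open>Points of R^d are vectors of type real^'n with d = CARD('n).\<close>

definition coord_sum :: "real^'n \<Rightarrow> real" where
  "coord_sum x = (\<Sum>i\<in>UNIV. x $ i)"

definition ones_vec :: "real^'n" where
  "ones_vec = (\<chi> i. 1)"

definition diag_distortion :: "real \<Rightarrow> real^'n \<Rightarrow> real^'n" where
  "diag_distortion \<delta> x =
     x - (((1 - \<delta>) / real CARD('n)) * coord_sum x) *\<^sub>R ones_vec"

definition int_vecs :: "(real^'n) set" where
  "int_vecs = {x. \<forall>i. x $ i \<in> \<int>}"

definition cube_vertices :: "(real^'n) set" where
  "cube_vertices = {p. \<forall>i. p $ i = 0 \<or> p $ i = 1}"

definition comp_le :: "real^'n \<Rightarrow> real^'n \<Rightarrow> bool" where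
  "comp_le p q \<longleftrightarrow> (\<forall>i. p $ i \<le> q $ i)"

text \<open>Vertex sets of the d-simplices of the Freudenthal triangulation of R^d:
  integer translates of chains p_0 < ... < p_d in {0,1}^d.\<close>
definition freudenthal_simplices :: "(real^'n) set set" where
  "freudenthal_simplices =
     {(\<lambda>p. z + p) ` S | z S. z \<in> int_vecs \<and> S \<subseteq> cube_vertices \<and>
        card S = CARD('n) + 1 \<and> (\<forall>p\<in>S. \<forall>q\<in>S. comp_le p q \<or> comp_le q p)}"

definition delaunay_simplices :: "real \<Rightarrow> (real^'n) set set" where
  "delaunay_simplices \<delta> = (\<lambda>\<sigma>. diag_distortion \<delta> ` \<sigma>) ` freudenthal_simplices"

definition lattice_points :: "real \<Rightarrow> (real^'n) set" where
  "lattice_points \<delta> = diag_distortion \<delta> ` int_vecs"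

definition circumcenter :: "(real^'n) set \<Rightarrow> real^'n" where
  "circumcenter \<tau> = (THE c. \<exists>r. \<forall>v\<in>\<tau>. dist v c = r)"

definition circumradius :: "(real^'n) set \<Rightarrow> real" where
  "circumradius \<tau> = dist (SOME v. v \<in> \<tau>) (circumcenter \<tau>)"

definition simplex_protection :: "real \<Rightarrow> (real^'n) set \<Rightarrow> real" where
  "simplex_protection \<delta> \<tau> =
     Inf {dist q (circumcenter \<tau>) - circumradius \<tau> | q. q \<in> lattice_points \<delta> \<and> q \<notin> \<tau>}"

definition lattice_protection :: "real \<Rightarrow> ('n::finite) itself \<Rightarrow> real" where
  "lattice_protection \<delta> (_::'n::finite itself) =
     Inf ((simplex_protection \<delta> :: (real^'n) set \<Rightarrow> real) ` delaunay_simplices \<delta>)"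

end

theory Submission
  imports Defs
begin

text \<open>
  Let \<open>z + p\<^sub>0 < \<dots> < z + p\<^sub>d\<close> be the vertices of a Freudenthal simplex, \<open>p\<^sub>k \<in> {0,1}\<^sup>d\<close> having
  \<open>k\<close> ones, and let \<open>r\<^sub>i\<close> be the step at which coordinate \<open>i\<close> switches on. With
  \<open>a = (1 - \<delta>\<^sup>2) / d\<close> and \<open>w\<^sub>i = (1 - a (2 r\<^sub>i - 1 - d)) / 2\<close>, expanding the norm gives for every \<open>u\<close>
    \<open>|T\<^sub>\<delta>(z + u) - T\<^sub>\<delta>(z + w)|\<^sup>2
       = R\<^sub>\<delta>\<^sup>2 + \<delta>\<^sup>2 \<Sum>\<^sub>i u\<^sub>i (u\<^sub>i - 1) + a \<Sum>\<^bsub>r\<^sub>i < r\<^sub>j\<^esub> (u\<^sub>i - u\<^sub>j)(u\<^sub>i - u\<^sub>j - 1)\<close>.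
  On integer vectors both sums are non-negative integers; the first vanishes exactly on \<open>{0,1}\<^sup>d\<close>,
  and on \<open>{0,1}\<^sup>d\<close> the second vanishes exactly on the chain. So \<open>T\<^sub>\<delta>(z + w)\<close> is equidistant from
  the vertices, hence the circumcenter, every other lattice point has squared distance at least
  \<open>R\<^sub>\<delta>\<^sup>2 + 2 min(\<delta>\<^sup>2, a)\<close>, and a neighbouring lattice point attains this bound. The three cases of
  the formula are the two branches of the minimum, which switch at \<open>\<delta>\<^sup>2 (d + 1) = 1\<close>.
\<close>

lemma coord_sum_diff: "coord_sum (x - y) = coord_sum x - coord_sum (y::real^'n)"
  by (simp add: coord_sum_def sum_subtractf)

lemma coord_sum_axis: "coord_sum (axis i c :: real^'n) = c"
  by (simp add: coord_sum_def axis_def)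

lemma diag_distortion_nth:
  "diag_distortion \<delta> x $ i = x $ i - (1 - \<delta>) / real CARD('n) * coord_sum (x::real^'n)"
  by (simp add: diag_distortion_def ones_vec_def)

lemma diag_distortion_diff:
  "diag_distortion \<delta> (x - y) = diag_distortion \<delta> x - diag_distortion \<delta> (y::real^'n)"
  by (simp add: vec_eq_iff diag_distortion_nth coord_sum_diff) (simp add: field_simps)

lemma diag_distortion_eq_0_iff:
  assumes "\<delta> \<noteq> 0"
  shows "diag_distortion \<delta> x = 0 \<longleftrightarrow> x = (0::real^'n)"
proof
  assume T0: "diag_distortion \<delta> x = 0"
  let ?b = "(1 - \<delta>) / real CARD('n)"
  have x_const: "x $ i = ?b * coord_sum x" for i
    using arg_cong[OF T0, of "\<lambda>v. v $ i"] by (simp add: diag_distortion_nth)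
  have "coord_sum x = (\<Sum>i\<in>UNIV. x $ i)"
    by (simp add: coord_sum_def)
  also have "\<dots> = (\<Sum>i\<in>(UNIV::'n set). ?b * coord_sum x)"
    by (rule sum.cong) (simp_all add: x_const)
  also have "\<dots> = (1 - \<delta>) * coord_sum x"
    by simp
  finally have "coord_sum x = 0"
    using assms by (simp add: algebra_simps)
  then show "x = 0"
    using x_const by (simp add: vec_eq_iff)
qed (simp add: vec_eq_iff diag_distortion_nth coord_sum_def)

lemma inj_diag_distortion:
  assumes "\<delta> \<noteq> 0"
  shows "inj (diag_distortion \<delta> :: real^'n \<Rightarrow> real^'n)"
proof (rule injI)
  fix x y :: "real^'n"
  assume "diag_distortion \<delta> x = diag_distortion \<delta> y"
  then have "diag_distortion \<delta> (x - y) = 0"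
    by (simp add: diag_distortion_diff)
  then show "x = y"
    using diag_distortion_eq_0_iff[OF assms] by (metis right_minus_eq)
qed

lemma inner_diag_distortion_axis:
  "inner (diag_distortion \<delta> (axis i 1)) u = diag_distortion \<delta> (u::real^'n) $ i"
proof -
  let ?b = "(1 - \<delta>) / real CARD('n)"
  have "inner (diag_distortion \<delta> (axis i 1)) u = (\<Sum>j\<in>UNIV. (axis i 1 $ j - ?b) * u $ j)"
    by (simp add: inner_vec_def diag_distortion_nth coord_sum_axis)
  also have "\<dots> = inner (axis i 1) u - ?b * coord_sum u"
    by (simp add: inner_vec_def left_diff_distrib sum_subtractf sum_distrib_left coord_sum_def)
  finally show ?thesis
    by (simp add: inner_axis' diag_distortion_nth)
qed

lemma norm_diag_distortion_sq:
  "(norm (diag_distortion \<delta> (x::real^'n)))\<^sup>2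
     = (\<Sum>i\<in>UNIV. (x $ i)\<^sup>2) - (1 - \<delta>\<^sup>2) / real CARD('n) * (coord_sum x)\<^sup>2"
proof -
  let ?b = "(1 - \<delta>) / real CARD('n)" and ?s = "coord_sum x"
  have cross: "(\<Sum>i\<in>(UNIV::'n set). 2 * ?b * ?s * x $ i) = 2 * ?b * ?s * ?s"
    by (simp only: sum_distrib_left[symmetric] coord_sum_def)
  have "(norm (diag_distortion \<delta> x))\<^sup>2 = (\<Sum>i\<in>UNIV. (x $ i - ?b * ?s)\<^sup>2)"
    unfolding dot_square_norm[symmetric] inner_vec_def
    by (simp add: diag_distortion_nth power2_eq_square)
  also have "\<dots> = (\<Sum>i\<in>UNIV. (x $ i)\<^sup>2 - 2 * ?b * ?s * x $ i + ?b\<^sup>2 * ?s\<^sup>2)"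
    by (rule sum.cong) (auto simp: power2_eq_square algebra_simps)
  also have "\<dots> = (\<Sum>i\<in>UNIV. (x $ i)\<^sup>2) - 2 * ?b * ?s * ?s + real CARD('n) * ?b\<^sup>2 * ?s\<^sup>2"
    by (simp only: sum.distrib sum_subtractf cross) simp
  also have "\<dots> = (\<Sum>i\<in>UNIV. (x $ i)\<^sup>2) - (1 - \<delta>\<^sup>2) / real CARD('n) * ?s\<^sup>2"
    by (simp add: power2_eq_square field_simps)
  finally show ?thesis .
qed

definition ones_count :: "real^'n \<Rightarrow> nat" where
  "ones_count p = card {i. p $ i = 1}"

lemma cube_vertices_nth: "p \<in> cube_vertices \<Longrightarrow> p $ i = 0 \<or> p $ i = 1"
  by (simp add: cube_vertices_def)

lemma cube_vertices_eqI:
  assumes "p \<in> cube_vertices" "q \<in> cube_vertices" "\<And>i. p $ i = 1 \<longleftrightarrow> q $ i = 1"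
  shows "p = q"
  unfolding vec_eq_iff
  using cube_vertices_nth[OF assms(1)] cube_vertices_nth[OF assms(2)] assms(3) by metis

lemma ones_count_le_card: "ones_count (p::real^'n) \<le> CARD('n)"
  unfolding ones_count_def by (rule card_mono) auto

locale cube_chain =
  fixes S :: "(real^'n) set"
  assumes chain_cube: "S \<subseteq> cube_vertices"
    and card_chain: "card S = CARD('n) + 1"
    and chain_comparable: "\<forall>p\<in>S. \<forall>q\<in>S. comp_le p q \<or> comp_le q p"
begin

lemma finite_chain: "finite S"
  using card_chain card.infinite by fastforce

lemma comp_le_if_ones_count_le:
  assumes "p \<in> S" "q \<in> S" "ones_count p \<le> ones_count q"
  shows "comp_le p q"
proof (rule ccontr)
  assume "\<not> comp_le p q"
  then have "comp_le q p"
    using chain_comparable assms by blast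
  have p_cube: "p \<in> cube_vertices" and q_cube: "q \<in> cube_vertices"
    using chain_cube assms by auto
  have sub: "{i. q $ i = 1} \<subseteq> {i. p $ i = 1}"
  proof
    fix i assume "i \<in> {i. q $ i = 1}"
    then have "1 \<le> p $ i"
      using \<open>comp_le q p\<close> unfolding comp_le_def mem_Collect_eq by metis
    then show "i \<in> {i. p $ i = 1}"
      using cube_vertices_nth[OF p_cube, of i] by auto
  qed
  have "{i. q $ i = 1} = {i. p $ i = 1}"
    using sub assms(3) card_mono[OF _ sub]
    by (intro card_subset_eq) (simp_all add: ones_count_def)
  then have "p = q"
    using cube_vertices_eqI[OF p_cube q_cube] by blast
  then show False
    using \<open>\<not> comp_le p q\<close> by (simp add: comp_le_def)
qed

lemma inj_on_ones_count: "inj_on ones_count S"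
proof
  fix p q assume "p \<in> S" "q \<in> S" "ones_count p = ones_count q"
  then have "comp_le p q" "comp_le q p"
    using comp_le_if_ones_count_le by auto
  then show "p = q"
    by (auto simp: comp_le_def vec_eq_iff intro: order.antisym)
qed

lemma ones_count_image: "ones_count ` S = {0..CARD('n)}"
proof (rule card_subset_eq)
  show "ones_count ` S \<subseteq> {0..CARD('n)}"
    using ones_count_le_card by auto
  show "card (ones_count ` S) = card {0..CARD('n)}"
    using card_image[OF inj_on_ones_count] card_chain by simp
qed simp

lemma ex_ones_count:
  assumes "k \<le> CARD('n)"
  obtains p where "p \<in> S" "ones_count p = k"
proof -
  have "k \<in> ones_count ` S"
    using assms ones_count_image by simp
  then show thesis
    using that by blast
qed

lemma nth_eq_1_if_ones_count_eq_card:
  assumes "ones_count (p::real^'n) = CARD('n)"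
  shows "p $ i = 1"
proof -
  have "{i. p $ i = 1} = UNIV"
    using assms by (intro card_eq_UNIV_imp_eq_UNIV) (auto simp: ones_count_def)
  then show ?thesis by auto
qed

definition entry_rank :: "'n \<Rightarrow> nat" where
  "entry_rank i = Min (ones_count ` {p\<in>S. p $ i = 1})"

lemma entry_rank_mem: "entry_rank i \<in> ones_count ` {p\<in>S. p $ i = 1}"
proof -
  obtain p where "p \<in> S" "ones_count p = CARD('n)"
    using ex_ones_count by blast
  then have "ones_count ` {p\<in>S. p $ i = 1} \<noteq> {}"
    using nth_eq_1_if_ones_count_eq_card by blast
  then show ?thesis
    unfolding entry_rank_def using finite_chain by (intro Min_in) simp_all
qed

lemma nth_eq_1_iff_entry_rank_le:
  assumes "p \<in> S"
  shows "p $ i = 1 \<longleftrightarrow> entry_rank i \<le> ones_count p"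
proof
  assume "p $ i = 1"
  then show "entry_rank i \<le> ones_count p"
    unfolding entry_rank_def using assms finite_chain by (intro Min_le) auto
next
  assume le: "entry_rank i \<le> ones_count p"
  obtain p0 where p0: "p0 \<in> S" "p0 $ i = 1" "ones_count p0 = entry_rank i"
    using entry_rank_mem[of i] by auto
  then have "comp_le p0 p"
    using comp_le_if_ones_count_le assms le by simp
  then have "1 \<le> p $ i"
    using p0(2) unfolding comp_le_def by metis
  then show "p $ i = 1"
    using cube_vertices_nth[of p i] chain_cube assms by auto
qed

lemma entry_rank_ge_1: "1 \<le> entry_rank i"
proof -
  obtain p0 where p0: "p0 $ i = 1" "ones_count p0 = entry_rank i"
    using entry_rank_mem[of i] by auto
  have "0 < card {j. p0 $ j = 1}"
    using p0(1) by (subst card_gt_0_iff) auto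
  then show ?thesis
    using p0(2) by (simp add: ones_count_def)
qed

lemma entry_rank_le_card: "entry_rank i \<le> CARD('n)"
proof -
  obtain p where "p \<in> S" "ones_count p = CARD('n)"
    using ex_ones_count by blast
  then show ?thesis
    using nth_eq_1_iff_entry_rank_le nth_eq_1_if_ones_count_eq_card by metis
qed

lemma card_entry_rank_le:
  assumes "k \<le> CARD('n)"
  shows "card {i. entry_rank i \<le> k} = k"
proof -
  obtain p where p: "p \<in> S" "ones_count p = k"
    using ex_ones_count assms by blast
  then have "{i. entry_rank i \<le> k} = {i. p $ i = 1}"
    using nth_eq_1_iff_entry_rank_le by auto
  then show ?thesis
    using p(2) by (simp add: ones_count_def)
qed

lemma inj_entry_rank: "inj entry_rank"
proof
  fix i j assume eq: "entry_rank i = entry_rank j"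
  let ?k = "entry_rank i"
  let ?A = "{l. entry_rank l \<le> ?k}" and ?B = "{l. entry_rank l \<le> ?k - 1}"
  have "card (?A - ?B) = card ?A - card ?B"
    by (rule card_Diff_subset) auto
  also have "\<dots> = 1"
    using card_entry_rank_le[of ?k] card_entry_rank_le[of "?k - 1"]
      entry_rank_le_card[of i] entry_rank_ge_1[of i] by simp
  finally have "card (?A - ?B) \<le> Suc 0" by simp
  moreover have "i \<in> ?A - ?B" "j \<in> ?A - ?B"
    using eq entry_rank_ge_1[of i] by auto
  ultimately show "i = j"
    by (auto simp: card_le_Suc0_iff_eq)
qed

lemma bij_entry_rank: "bij_betw entry_rank UNIV {1..CARD('n)}"
  unfolding bij_betw_def
proof
  show "inj_on entry_rank UNIV"
    using inj_entry_rank by simp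
  show "range entry_rank = {1..CARD('n)}"
  proof (rule card_subset_eq)
    show "range entry_rank \<subseteq> {1..CARD('n)}"
      using entry_rank_ge_1 entry_rank_le_card by auto
    show "card (range entry_rank) = card {1..CARD('n)}"
      using card_image[OF inj_entry_rank] by simp
  qed simp
qed

lemma ex_entry_rank_eq:
  assumes "1 \<le> k" "k \<le> CARD('n)"
  obtains i where "entry_rank i = k"
proof -
  have "k \<in> range entry_rank"
    using assms bij_entry_rank by (simp add: bij_betw_def)
  then show thesis
    using that by blast
qed

lemma chain_step_axis: "\<exists>p\<in>S. \<exists>p'\<in>S. p - p' = axis i 1"
proof -
  obtain p where p: "p \<in> S" "ones_count p = entry_rank i"
    using ex_ones_count entry_rank_le_card by blast
  have "entry_rank i - 1 \<le> CARD('n)"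
    using entry_rank_le_card[of i] by simp
  then obtain p' where p': "p' \<in> S" "ones_count p' = entry_rank i - 1"
    by (rule ex_ones_count)
  have "p $ j - p' $ j = axis i 1 $ j" for j
  proof -
    have "p $ j = 1 \<longleftrightarrow> entry_rank j \<le> entry_rank i"
      using nth_eq_1_iff_entry_rank_le[OF p(1)] p(2) by simp
    moreover have "p' $ j = 1 \<longleftrightarrow> entry_rank j < entry_rank i"
      using nth_eq_1_iff_entry_rank_le[OF p'(1), of j] p'(2) entry_rank_ge_1[of i] by auto
    moreover have "entry_rank j = entry_rank i \<longleftrightarrow> j = i"
      using inj_entry_rank by (auto dest: injD)
    moreover have "p $ j = 0 \<or> p $ j = 1" "p' $ j = 0 \<or> p' $ j = 1"
      using chain_cube p(1) p'(1) cube_vertices_nth by auto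
    ultimately show ?thesis
      by (auto simp: axis_def)
  qed
  then show ?thesis
    using p p' by (metis vec_eq_iff vector_minus_component)
qed

definition rank_coord :: "nat \<Rightarrow> 'n" where
  "rank_coord = inv_into UNIV entry_rank"

lemma rank_coord_entry_rank [simp]: "rank_coord (entry_rank i) = i"
  unfolding rank_coord_def using inj_entry_rank by simp

lemma entry_rank_rank_coord:
  assumes "1 \<le> k" "k \<le> CARD('n)"
  shows "entry_rank (rank_coord k) = k"
  unfolding rank_coord_def using assms bij_entry_rank
  by (intro f_inv_into_f) (auto simp: bij_betw_def)

lemma sum_by_entry_rank:
  "(\<Sum>i\<in>UNIV. g i (entry_rank i)) = (\<Sum>k=1..CARD('n). g (rank_coord k) k)"
  using sum.reindex_bij_betw[OF bij_entry_rank, of "\<lambda>k. g (rank_coord k) k"] by simp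

end

lemma sum_centered_odd: "(\<Sum>k=1..n. 2 * real k - 1 - D) = (real n)\<^sup>2 - real n * D"
  by (induction n) (auto simp: power2_eq_square algebra_simps)

lemma sum_centered_odd_sq:
  "(\<Sum>k=1..n. (2 * real k - 1 - D)\<^sup>2) = real n * (4 * (real n)\<^sup>2 - 1) / 3 - 2 * D * (real n)\<^sup>2 + real n * D\<^sup>2"
  by (induction n) (auto simp: power2_eq_square field_simps)

lemma sum_pairs_shifted_sq:
  fixes y :: "nat \<Rightarrow> real"
  shows "real n * (\<Sum>k=1..n. (y k)\<^sup>2) - (\<Sum>k=1..n. y k)\<^sup>2 + (\<Sum>k=1..n. (2 * real k - 1 - real n) * y k)
       = (\<Sum>l=1..n. \<Sum>k=1..<l. (y k - y l) * (y k - y l - 1))"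
proof (induction n)
  case 0
  then show ?case by simp
next
  case (Suc n)
  let ?Y = "y (Suc n)" and ?s = "\<Sum>k=1..n. y k" and ?s2 = "\<Sum>k=1..n. (y k)\<^sup>2"
    and ?t = "\<Sum>k=1..n. (2 * real k - 1 - real n) * y k"
  have "(\<Sum>k=1..n. (2 * real k - 1 - real (Suc n)) * y k) = (\<Sum>k=1..n. (2 * real k - 1 - real n) * y k - y k)"
    by (rule sum.cong) (auto simp: algebra_simps)
  then have shift: "(\<Sum>k=1..n. (2 * real k - 1 - real (Suc n)) * y k) = ?t - ?s"
    by (simp add: sum_subtractf)
  have new_pairs: "(\<Sum>k=1..<Suc n. (y k - ?Y) * (y k - ?Y - 1))
      = ?s2 - 2 * ?Y * ?s + real n * ?Y\<^sup>2 - ?s + real n * ?Y"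
  proof -
    have "(\<Sum>k=1..<Suc n. (y k - ?Y) * (y k - ?Y - 1))
        = (\<Sum>k=1..n. (y k)\<^sup>2 + (- 2 * ?Y - 1) * y k + (?Y\<^sup>2 + ?Y))"
      by (subst atLeastLessThanSuc_atLeastAtMost, rule sum.cong) (auto simp: power2_eq_square algebra_simps)
    also have "\<dots> = ?s2 + (- 2 * ?Y - 1) * ?s + real n * (?Y\<^sup>2 + ?Y)"
      by (simp add: sum.distrib sum_distrib_left)
    finally show ?thesis
      by (simp add: algebra_simps)
  qed
  have "(\<Sum>l=1..Suc n. \<Sum>k=1..<l. (y k - y l) * (y k - y l - 1))
      = real n * ?s2 - ?s\<^sup>2 + ?t + (?s2 - 2 * ?Y * ?s + real n * ?Y\<^sup>2 - ?s + real n * ?Y)"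
    using Suc.IH new_pairs by simp
  also have "\<dots> = real (Suc n) * (\<Sum>k=1..Suc n. (y k)\<^sup>2) - (\<Sum>k=1..Suc n. y k)\<^sup>2
      + (\<Sum>k=1..Suc n. (2 * real k - 1 - real (Suc n)) * y k)"
    using shift by (simp add: power2_eq_square algebra_simps)
  finally show ?case by simp
qed

lemma Ints_mult_pred_nonneg:
  assumes "t \<in> \<int>"
  shows "0 \<le> t * (t - 1 :: real)"
proof -
  obtain m where m: "t = of_int m"
    using assms Ints_cases by blast
  have "0 \<le> m * (m - 1)"
  proof (cases "m \<ge> 1")
    case False
    then show ?thesis by (simp add: mult_nonpos_nonpos)
  qed simp
  then have "0 \<le> real_of_int (m * (m - 1))"
    by linarith
  then show ?thesis
    using m by simp
qed

lemma Ints_mult_pred_ge_2: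
  assumes "t \<in> \<int>" "t \<noteq> 0" "t \<noteq> 1"
  shows "2 \<le> t * (t - 1 :: real)"
proof -
  obtain m where m: "t = of_int m"
    using assms Ints_cases by blast
  then have "m \<le> -1 \<or> 2 \<le> m"
    using assms by auto
  then have "2 \<le> m * (m - 1)"
  proof
    assume "m \<le> -1"
    then have "1 * 2 \<le> (- m) * (1 - m)"
      by (intro mult_mono) auto
    then show ?thesis
      by (simp add: algebra_simps)
  qed (use mult_mono[of 2 m 1 "m - 1"] in simp)
  then have "2 \<le> real_of_int (m * (m - 1))"
    by linarith
  then show ?thesis
    using m by simp
qed

lemma int_vecs_diff: "x \<in> int_vecs \<Longrightarrow> y \<in> int_vecs \<Longrightarrow> x - y \<in> int_vecs"
  by (simp add: int_vecs_def Ints_diff)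

lemma int_vecs_add: "x \<in> int_vecs \<Longrightarrow> y \<in> int_vecs \<Longrightarrow> x + y \<in> int_vecs"
  by (simp add: int_vecs_def Ints_add)

lemma axis_in_int_vecs: "c \<in> \<int> \<Longrightarrow> axis i c \<in> int_vecs"
  by (simp add: int_vecs_def axis_def)

definition cube_excess :: "real^'n \<Rightarrow> real" where
  "cube_excess u = (\<Sum>i\<in>UNIV. u $ i * (u $ i - 1))"

lemma cube_excess_eq_0:
  "u \<in> cube_vertices \<Longrightarrow> cube_excess u = 0"
  unfolding cube_excess_def cube_vertices_def by (rule sum.neutral) force

lemma cube_excess_ge_2:
  assumes "u \<in> int_vecs" "u \<notin> cube_vertices"
  shows "2 \<le> cube_excess u"
proof -
  obtain i where "u $ i \<noteq> 0" "u $ i \<noteq> 1"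
    using assms(2) by (auto simp: cube_vertices_def)
  then have "2 \<le> u $ i * (u $ i - 1)"
    using assms(1) by (intro Ints_mult_pred_ge_2) (auto simp: int_vecs_def)
  also have "\<dots> \<le> cube_excess u"
    unfolding cube_excess_def using assms(1)
    by (intro member_le_sum Ints_mult_pred_nonneg) (auto simp: int_vecs_def)
  finally show ?thesis .
qed

lemma sum_axis_nth:
  assumes "\<And>j. f j 0 = 0"
  shows "(\<Sum>j\<in>UNIV. f j (axis i c $ j)) = f i c"
proof -
  have "(\<Sum>j\<in>UNIV. f j (axis i c $ j)) = (\<Sum>j\<in>UNIV. if j = i then f i c else 0)"
    by (rule sum.cong) (auto simp: axis_def assms)
  then show ?thesis by simp
qed

lemma cube_excess_axis: "cube_excess (axis i c :: real^'n) = c * (c - 1)"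
  unfolding cube_excess_def by (rule sum_axis_nth[where f = "\<lambda>j t. t * (t - 1)"]) simp

definition delaunay_sq_radius :: "real \<Rightarrow> real \<Rightarrow> real" where
  "delaunay_sq_radius \<delta> d = (\<delta>^4 * (d\<^sup>2 - 1) + \<delta>\<^sup>2 * (d\<^sup>2 + 2) + d\<^sup>2 - 1) / (12 * d)"

definition protection_gap :: "real \<Rightarrow> real \<Rightarrow> real" where
  "protection_gap \<delta> d = 2 * min (\<delta>\<^sup>2) ((1 - \<delta>\<^sup>2) / d)"

context cube_chain
begin

definition rank_offset :: "'n \<Rightarrow> real" where
  "rank_offset i = 2 * real (entry_rank i) - 1 - real CARD('n)"

lemma sum_rank_offset: "(\<Sum>i\<in>UNIV. rank_offset i) = 0"
  using sum_by_entry_rank[of "\<lambda>i k. 2 * real k - 1 - real CARD('n)"]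
    sum_centered_odd[where n = "CARD('n)" and D = "real CARD('n)"]
  by (simp add: rank_offset_def power2_eq_square)

lemma sum_rank_offset_sq: "(\<Sum>i\<in>UNIV. (rank_offset i)\<^sup>2) = (real CARD('n)^3 - real CARD('n)) / 3"
  using sum_by_entry_rank[of "\<lambda>i k. (2 * real k - 1 - real CARD('n))\<^sup>2"]
    sum_centered_odd_sq[where n = "CARD('n)" and D = "real CARD('n)"]
  by (simp add: rank_offset_def power2_eq_square power3_eq_cube field_simps)

definition chain_excess :: "real^'n \<Rightarrow> real" where
  "chain_excess u = real CARD('n) * (\<Sum>i\<in>UNIV. (u $ i)\<^sup>2) - (coord_sum u)\<^sup>2 + (\<Sum>i\<in>UNIV. rank_offset i * u $ i)"

definition chain_center :: "real \<Rightarrow> real^'n" where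
  "chain_center a = (\<chi> i. (1 - a * rank_offset i) / 2)"

lemma coord_sum_chain_center: "coord_sum (chain_center a) = real CARD('n) / 2"
proof -
  have "coord_sum (chain_center a) = (\<Sum>i\<in>UNIV. 1/2 - a/2 * rank_offset i)"
    unfolding coord_sum_def chain_center_def by (rule sum.cong) (auto simp: field_simps)
  also have "\<dots> = (\<Sum>i\<in>(UNIV::'n set). 1/2) - a/2 * (\<Sum>i\<in>UNIV. rank_offset i)"
    by (simp only: sum_subtractf sum_distrib_left)
  finally show ?thesis
    by (simp add: sum_rank_offset)
qed

lemma sum_sq_chain_center:
  "(\<Sum>i\<in>UNIV. (chain_center a $ i)\<^sup>2) = (real CARD('n) + a\<^sup>2 * (real CARD('n)^3 - real CARD('n)) / 3) / 4"
proof -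
  have "(\<Sum>i\<in>UNIV. (chain_center a $ i)\<^sup>2)
      = (\<Sum>i\<in>UNIV. 1/4 - a/2 * rank_offset i + a\<^sup>2/4 * (rank_offset i)\<^sup>2)"
    unfolding chain_center_def by (rule sum.cong) (auto simp: field_simps power2_eq_square)
  also have "\<dots> = (\<Sum>i\<in>(UNIV::'n set). 1/4) - a/2 * (\<Sum>i\<in>UNIV. rank_offset i)
                   + a\<^sup>2/4 * (\<Sum>i\<in>UNIV. (rank_offset i)\<^sup>2)"
    by (simp only: sum.distrib sum_subtractf sum_distrib_left)
  finally show ?thesis
    by (simp add: sum_rank_offset sum_rank_offset_sq field_simps)
qed

lemma inner_chain_center:
  "(\<Sum>i\<in>UNIV. u $ i * chain_center a $ i) = (coord_sum u - a * (\<Sum>i\<in>UNIV. rank_offset i * u $ i)) / 2"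
proof -
  have "(\<Sum>i\<in>UNIV. u $ i * chain_center a $ i) = (\<Sum>i\<in>UNIV. 1/2 * u $ i - a/2 * (rank_offset i * u $ i))"
    unfolding chain_center_def by (rule sum.cong) (auto simp: field_simps)
  also have "\<dots> = 1/2 * coord_sum u - a/2 * (\<Sum>i\<in>UNIV. rank_offset i * u $ i)"
    unfolding coord_sum_def by (simp only: sum_subtractf sum_distrib_left)
  finally show ?thesis
    by simp
qed

lemma distortion_form_chain_center:
  assumes a: "a = (1 - \<delta>\<^sup>2) / real CARD('n)"
  shows "(\<Sum>i\<in>UNIV. (u $ i - chain_center a $ i)\<^sup>2) - a * (coord_sum u - coord_sum (chain_center a))\<^sup>2
     = delaunay_sq_radius \<delta> (real CARD('n)) + \<delta>\<^sup>2 * cube_excess u + a * chain_excess u"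
proof -
  let ?d = "real CARD('n)"
  have expand: "(\<Sum>i\<in>UNIV. (u $ i - chain_center a $ i)\<^sup>2)
      = (\<Sum>i\<in>UNIV. (u $ i)\<^sup>2) - 2 * (\<Sum>i\<in>UNIV. u $ i * chain_center a $ i)
        + (\<Sum>i\<in>UNIV. (chain_center a $ i)\<^sup>2)"
  proof -
    have "(\<Sum>i\<in>UNIV. (u $ i - chain_center a $ i)\<^sup>2)
        = (\<Sum>i\<in>UNIV. (u $ i)\<^sup>2 - 2 * (u $ i * chain_center a $ i) + (chain_center a $ i)\<^sup>2)"
      by (rule sum.cong) (auto simp: power2_eq_square algebra_simps)
    then show ?thesis
      by (simp only: sum.distrib sum_subtractf sum_distrib_left)
  qed
  have cube: "cube_excess u = (\<Sum>i\<in>UNIV. (u $ i)\<^sup>2) - coord_sum u"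
  proof -
    have "cube_excess u = (\<Sum>i\<in>UNIV. (u $ i)\<^sup>2 - u $ i)"
      unfolding cube_excess_def by (rule sum.cong) (auto simp: power2_eq_square algebra_simps)
    then show ?thesis
      by (simp add: sum_subtractf coord_sum_def)
  qed
  have d2: "\<delta>\<^sup>2 = 1 - a * ?d"
    using a by simp
  have d4: "\<delta>^4 = (1 - a * ?d)\<^sup>2"
    using d2 by (metis power2_eq_square power4_eq_xxxx power_mult_distrib mult.assoc)
  show ?thesis
    unfolding expand coord_sum_chain_center sum_sq_chain_center inner_chain_center cube
      chain_excess_def delaunay_sq_radius_def d4 d2
    by (simp add: field_simps power2_eq_square power3_eq_cube)
qed

lemma dist_chain_center_sq:
  fixes \<delta> :: real
  defines "a \<equiv> (1 - \<delta>\<^sup>2) / real CARD('n)"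
  shows "(dist (diag_distortion \<delta> x) (diag_distortion \<delta> (z + chain_center a)))\<^sup>2
     = delaunay_sq_radius \<delta> (real CARD('n)) + \<delta>\<^sup>2 * cube_excess (x - z) + a * chain_excess (x - z)"
proof -
  have "(dist (diag_distortion \<delta> x) (diag_distortion \<delta> (z + chain_center a)))\<^sup>2
      = (norm (diag_distortion \<delta> ((x - z) - chain_center a)))\<^sup>2"
    by (simp add: dist_norm diag_distortion_diff[symmetric] algebra_simps)
  also have "\<dots> = (\<Sum>i\<in>UNIV. ((x - z) $ i - chain_center a $ i)\<^sup>2)
                   - a * (coord_sum (x - z) - coord_sum (chain_center a))\<^sup>2"
    by (simp add: norm_diag_distortion_sq coord_sum_diff a_def)
  also have "\<dots> = delaunay_sq_radius \<delta> (real CARD('n)) + \<delta>\<^sup>2 * cube_excess (x - z) + a * chain_excess (x - z)"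
    by (rule distortion_form_chain_center) (simp add: a_def)
  finally show ?thesis .
qed

lemma chain_excess_eq_sum_pairs:
  "chain_excess u = (\<Sum>l=1..CARD('n). \<Sum>k=1..<l.
     (u $ rank_coord k - u $ rank_coord l) * (u $ rank_coord k - u $ rank_coord l - 1))"
proof -
  have "(\<Sum>i\<in>UNIV. (u $ i)\<^sup>2) = (\<Sum>k=1..CARD('n). (u $ rank_coord k)\<^sup>2)"
    using sum_by_entry_rank[of "\<lambda>i k. (u $ i)\<^sup>2"] by simp
  moreover have "coord_sum u = (\<Sum>k=1..CARD('n). u $ rank_coord k)"
    using sum_by_entry_rank[of "\<lambda>i k. u $ i"] by (simp add: coord_sum_def)
  moreover have "(\<Sum>i\<in>UNIV. rank_offset i * u $ i)
      = (\<Sum>k=1..CARD('n). (2 * real k - 1 - real CARD('n)) * u $ rank_coord k)"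
    using sum_by_entry_rank[of "\<lambda>i k. (2 * real k - 1 - real CARD('n)) * u $ i"]
    by (simp add: rank_offset_def)
  ultimately show ?thesis
    unfolding chain_excess_def
    using sum_pairs_shifted_sq[where n = "CARD('n)" and y = "\<lambda>k. u $ rank_coord k"] by simp
qed

lemma chain_excess_nonneg:
  assumes "u \<in> int_vecs"
  shows "0 \<le> chain_excess u"
  unfolding chain_excess_eq_sum_pairs using assms
  by (intro sum_nonneg Ints_mult_pred_nonneg Ints_diff) (auto simp: int_vecs_def)

lemma chain_excess_eq_0:
  assumes "p \<in> S"
  shows "chain_excess p = 0"
  unfolding chain_excess_eq_sum_pairs
proof (intro sum.neutral ballI)
  fix l k assume "l \<in> {1..CARD('n)}" "k \<in> {1..<l}"
  then have ranks: "entry_rank (rank_coord k) < entry_rank (rank_coord l)"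
    by (simp add: entry_rank_rank_coord)
  have "p $ rank_coord l = 1 \<Longrightarrow> p $ rank_coord k = 1"
    using ranks nth_eq_1_iff_entry_rank_le[OF assms] by (meson less_imp_le order.trans)
  moreover have "p $ rank_coord k = 0 \<or> p $ rank_coord k = 1" "p $ rank_coord l = 0 \<or> p $ rank_coord l = 1"
    using assms chain_cube cube_vertices_nth by auto
  ultimately show "(p $ rank_coord k - p $ rank_coord l) * (p $ rank_coord k - p $ rank_coord l - 1) = 0"
    by auto
qed

lemma mem_chain_if_ones_down_closed:
  assumes u_cube: "u \<in> cube_vertices"
    and down: "\<And>i j. entry_rank i \<le> entry_rank j \<Longrightarrow> u $ j = 1 \<Longrightarrow> u $ i = 1"
  shows "u \<in> S"
proof -
  let ?O = "{i. u $ i = 1}"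
  have "?O \<subseteq> {i. entry_rank i \<le> ones_count u}"
  proof
    fix j assume "j \<in> ?O"
    then have "{i. entry_rank i \<le> entry_rank j} \<subseteq> ?O"
      using down by auto
    then have "card {i. entry_rank i \<le> entry_rank j} \<le> ones_count u"
      unfolding ones_count_def by (intro card_mono) auto
    then show "j \<in> {i. entry_rank i \<le> ones_count u}"
      using card_entry_rank_le[OF entry_rank_le_card[of j]] by simp
  qed
  then have O_eq: "?O = {i. entry_rank i \<le> ones_count u}"
    using card_entry_rank_le[OF ones_count_le_card[of u]]
    by (intro card_subset_eq) (simp_all add: ones_count_def)
  obtain p where p: "p \<in> S" "ones_count p = ones_count u"
    using ex_ones_count ones_count_le_card by blast
  have "u = p"
    using nth_eq_1_iff_entry_rank_le[OF p(1)] p(2) O_eq chain_cube p(1)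
    by (intro cube_vertices_eqI[OF u_cube]) auto
  then show ?thesis
    using p(1) by simp
qed

lemma chain_excess_ge_2:
  assumes "u \<in> cube_vertices" "u \<notin> S"
  shows "2 \<le> chain_excess u"
proof -
  obtain i j where ij: "entry_rank i \<le> entry_rank j" "u $ j = 1" "u $ i \<noteq> 1"
    using mem_chain_if_ones_down_closed assms by blast
  then have "entry_rank i < entry_rank j" "u $ i = 0"
    using cube_vertices_nth[OF assms(1), of i] inj_entry_rank by (auto simp: le_less dest: injD)
  let ?g = "\<lambda>k l. (u $ rank_coord k - u $ rank_coord l) * (u $ rank_coord k - u $ rank_coord l - 1)"
  have g_nonneg: "0 \<le> (u $ a - u $ b) * (u $ a - u $ b - 1)" for a b
    using cube_vertices_nth[OF assms(1), of a] cube_vertices_nth[OF assms(1), of b] by auto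
  have "2 = ?g (entry_rank i) (entry_rank j)"
    using ij \<open>u $ i = 0\<close> by simp
  also have "\<dots> \<le> (\<Sum>k=1..<entry_rank j. ?g k (entry_rank j))"
    using \<open>entry_rank i < entry_rank j\<close> entry_rank_ge_1[of i] g_nonneg
    by (intro member_le_sum) auto
  also have "\<dots> \<le> (\<Sum>l=1..CARD('n). \<Sum>k=1..<l. ?g k l)"
    using entry_rank_ge_1[of j] entry_rank_le_card[of j] g_nonneg
    by (intro member_le_sum[where f = "\<lambda>l. \<Sum>k=1..<l. ?g k l"] sum_nonneg) auto
  finally show ?thesis
    unfolding chain_excess_eq_sum_pairs .
qed


lemma chain_excess_axis:
  "chain_excess (axis i c) = (real CARD('n) - 1) * c\<^sup>2 + rank_offset i * c"
proof -
  have "(\<Sum>j\<in>UNIV. (axis i c $ j)\<^sup>2) = c\<^sup>2"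
    by (rule sum_axis_nth[where f = "\<lambda>j t. t\<^sup>2"]) simp
  moreover have "(\<Sum>j\<in>UNIV. rank_offset j * axis i c $ j) = rank_offset i * c"
    by (rule sum_axis_nth[where f = "\<lambda>j t. rank_offset j * t"]) simp
  ultimately show ?thesis
    by (simp add: chain_excess_def coord_sum_axis algebra_simps)
qed

end

locale distorted_chain = cube_chain S for S :: "(real^'n) set" +
  fixes \<delta> :: real and z :: "real^'n"
  assumes delta_pos: "0 < \<delta>" and delta_le_1: "\<delta> \<le> 1" and shift_int: "z \<in> int_vecs"
  fixes weight sq_radius sq_gap :: real
  defines weight_def: "weight \<equiv> (1 - \<delta>\<^sup>2) / real CARD('n)"
    and sq_radius_def: "sq_radius \<equiv> delaunay_sq_radius \<delta> (real CARD('n))"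
    and sq_gap_def: "sq_gap \<equiv> protection_gap \<delta> (real CARD('n))"
begin

definition distorted_simplex :: "(real^'n) set" where
  "distorted_simplex = diag_distortion \<delta> ` (\<lambda>p. z + p) ` S"

definition distorted_center :: "real^'n" where
  "distorted_center = diag_distortion \<delta> (z + chain_center weight)"

lemma weight_nonneg: "0 \<le> weight"
  using delta_pos delta_le_1 by (simp add: weight_def power_le_one)

lemma sq_gap_eq: "sq_gap = 2 * min (\<delta>\<^sup>2) weight"
  by (simp add: sq_gap_def protection_gap_def weight_def)

lemma dist_distorted_center_sq:
  "(dist (diag_distortion \<delta> x) distorted_center)\<^sup>2
     = sq_radius + \<delta>\<^sup>2 * cube_excess (x - z) + weight * chain_excess (x - z)"
  unfolding distorted_center_def weight_def sq_radius_def by (rule dist_chain_center_sq)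

lemma mem_distorted_simplex_iff: "diag_distortion \<delta> x \<in> distorted_simplex \<longleftrightarrow> x - z \<in> S"
proof -
  have "diag_distortion \<delta> x \<in> distorted_simplex \<longleftrightarrow> x \<in> (\<lambda>p. z + p) ` S"
    unfolding distorted_simplex_def using delta_pos
    by (simp add: inj_image_mem_iff[OF inj_diag_distortion])
  also have "\<dots> \<longleftrightarrow> x - z \<in> S"
    by (auto simp: image_iff) (metis add.commute diff_add_cancel)
  finally show ?thesis .
qed

lemma dist_distorted_center_vertex:
  assumes "v \<in> distorted_simplex"
  shows "dist v distorted_center = sqrt sq_radius"
proof -
  obtain p where p: "p \<in> S" "v = diag_distortion \<delta> (z + p)"
    using assms unfolding distorted_simplex_def by auto
  then have "(dist v distorted_center)\<^sup>2 = sq_radius"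
    using dist_distorted_center_sq[of "z + p"] cube_excess_eq_0[of p] chain_excess_eq_0[OF p(1)] chain_cube
    by auto
  then show ?thesis
    using real_sqrt_unique by force
qed

text \<open>Consecutive vertices of the simplex differ by the image of a unit vector, so the difference of two
  equidistant points is orthogonal to every \<open>diag_distortion \<delta> (axis i 1)\<close>; by self-adjointness it lies in
  the kernel of the distortion.\<close>

lemma equidistant_eq_distorted_center:
  assumes "\<forall>v\<in>distorted_simplex. dist v c = r"
  shows "c = distorted_center"
proof -
  have "diag_distortion \<delta> (c - distorted_center) $ i = 0" for i
  proof -
    obtain p p' where pp: "p \<in> S" "p' \<in> S" "p - p' = axis i 1"
      using chain_step_axis by blast
    let ?v = "diag_distortion \<delta> (z + p)" and ?v' = "diag_distortion \<delta> (z + p')"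
    have v: "?v \<in> distorted_simplex" "?v' \<in> distorted_simplex"
      unfolding distorted_simplex_def using pp by auto
    have "inner (?v - ?v') (c - distorted_center)
        = ((norm (?v - distorted_center))\<^sup>2 - (norm (?v - c))\<^sup>2
           - (norm (?v' - distorted_center))\<^sup>2 + (norm (?v' - c))\<^sup>2) / 2"
      by (simp add: dot_square_norm[symmetric] inner_diff_left inner_diff_right inner_commute field_simps)
    also have "\<dots> = 0"
      using dist_distorted_center_vertex[OF v(1)] dist_distorted_center_vertex[OF v(2)] assms v by (simp add: dist_norm)
    finally have "inner (diag_distortion \<delta> (axis i 1)) (c - distorted_center) = 0"
      by (metis pp(3) diag_distortion_diff add_diff_cancel_left)
    then show ?thesis
      by (simp add: inner_diag_distortion_axis)
  qed
  then have "diag_distortion \<delta> (c - distorted_center) = 0"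
    by (simp add: vec_eq_iff)
  then show ?thesis
    using diag_distortion_eq_0_iff[of \<delta> "c - distorted_center"] delta_pos by simp
qed

lemma circumcenter_distorted_simplex: "circumcenter distorted_simplex = distorted_center"
  unfolding circumcenter_def
  using dist_distorted_center_vertex equidistant_eq_distorted_center by (intro the_equality) blast+

lemma circumradius_distorted_simplex: "circumradius distorted_simplex = sqrt sq_radius"
proof -
  have "distorted_simplex \<noteq> {}"
    using card_chain by (auto simp: distorted_simplex_def)
  then have "(SOME v. v \<in> distorted_simplex) \<in> distorted_simplex"
    by (simp add: some_in_eq)
  then show ?thesis
    unfolding circumradius_def circumcenter_distorted_simplex by (rule dist_distorted_center_vertex)
qed

lemma dist_distorted_center_lattice_point_ge:
  assumes "x \<in> int_vecs" "x - z \<notin> S"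
  shows "sq_radius + sq_gap \<le> (dist (diag_distortion \<delta> x) distorted_center)\<^sup>2"
proof -
  have u_int: "x - z \<in> int_vecs"
    using assms(1) shift_int by (rule int_vecs_diff)
  have "sq_gap \<le> \<delta>\<^sup>2 * cube_excess (x - z) + weight * chain_excess (x - z)"
  proof (cases "x - z \<in> cube_vertices")
    case True
    then have "2 * weight \<le> weight * chain_excess (x - z)"
      using chain_excess_ge_2 assms(2) weight_nonneg by (simp add: mult_left_mono mult.commute)
    then show ?thesis
      using cube_excess_eq_0[OF True] by (simp add: sq_gap_eq)
  next
    case False
    then have "2 * \<delta>\<^sup>2 \<le> \<delta>\<^sup>2 * cube_excess (x - z)"
      using mult_right_mono[OF cube_excess_ge_2[OF u_int False], of "\<delta>\<^sup>2"] by (simp add: mult.commute)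
    moreover have "0 \<le> weight * chain_excess (x - z)"
      using chain_excess_nonneg[OF u_int] weight_nonneg by simp
    ultimately show ?thesis
      by (simp add: sq_gap_eq)
  qed
  then show ?thesis
    using dist_distorted_center_sq[of x] by simp
qed

text \<open>Witnesses: minus the unit vector of the coordinate entering last (cube excess 2, chain excess 0)
  when \<open>\<delta>\<^sup>2 \<le> weight\<close>, and otherwise the unit vector of the coordinate entering second
  (cube excess 0, chain excess 2).\<close>

lemma ex_lattice_point_at_gap:
  assumes "2 \<le> CARD('n)"
  obtains x where "x \<in> int_vecs" "x - z \<notin> S"
    "(dist (diag_distortion \<delta> x) distorted_center)\<^sup>2 = sq_radius + sq_gap"
proof (cases "\<delta>\<^sup>2 \<le> weight")
  case True
  obtain i where i: "entry_rank i = CARD('n)"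
    using ex_entry_rank_eq[of "CARD('n)"] assms by auto
  let ?u = "axis i (-1) :: real^'n"
  have excess: "cube_excess ?u = 2" "chain_excess ?u = 0"
    using i by (simp_all add: cube_excess_axis chain_excess_axis rank_offset_def)
  show thesis
  proof (rule that[of "z + ?u"])
    show "z + ?u \<in> int_vecs"
      using shift_int by (intro int_vecs_add axis_in_int_vecs) simp_all
    show "z + ?u - z \<notin> S"
      using excess(1) cube_excess_eq_0 chain_cube by (metis subsetD add_diff_cancel_left' zero_neq_numeral)
    show "(dist (diag_distortion \<delta> (z + ?u)) distorted_center)\<^sup>2 = sq_radius + sq_gap"
      using dist_distorted_center_sq[of "z + ?u"] excess True by (simp add: sq_gap_eq)
  qed
next
  case False
  obtain i where i: "entry_rank i = 2"
    using ex_entry_rank_eq[of 2] assms by auto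
  let ?u = "axis i 1 :: real^'n"
  have excess: "cube_excess ?u = 0" "chain_excess ?u = 2"
    using i by (simp_all add: cube_excess_axis chain_excess_axis rank_offset_def)
  show thesis
  proof (rule that[of "z + ?u"])
    show "z + ?u \<in> int_vecs"
      using shift_int by (intro int_vecs_add axis_in_int_vecs) simp_all
    show "z + ?u - z \<notin> S"
      using excess chain_excess_eq_0 by auto
    show "(dist (diag_distortion \<delta> (z + ?u)) distorted_center)\<^sup>2 = sq_radius + sq_gap"
      using dist_distorted_center_sq[of "z + ?u"] excess False by (simp add: sq_gap_eq)
  qed
qed

lemma simplex_protection_distorted_simplex:
  assumes "2 \<le> CARD('n)"
  shows "simplex_protection \<delta> distorted_simplex = sqrt (sq_radius + sq_gap) - sqrt sq_radius"
  unfolding simplex_protection_def circumcenter_distorted_simplex circumradius_distorted_simplex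
proof (rule cInf_eq_minimum)
  obtain x where x: "x \<in> int_vecs" "x - z \<notin> S"
    "(dist (diag_distortion \<delta> x) distorted_center)\<^sup>2 = sq_radius + sq_gap"
    by (rule ex_lattice_point_at_gap[OF assms])
  have "diag_distortion \<delta> x \<in> lattice_points \<delta>" "diag_distortion \<delta> x \<notin> distorted_simplex"
    using x(1,2) mem_distorted_simplex_iff by (simp_all add: lattice_points_def)
  moreover have "dist (diag_distortion \<delta> x) distorted_center = sqrt (sq_radius + sq_gap)"
    using real_sqrt_unique[OF x(3)] by simp
  ultimately show "sqrt (sq_radius + sq_gap) - sqrt sq_radius
      \<in> {dist q distorted_center - sqrt sq_radius | q. q \<in> lattice_points \<delta> \<and> q \<notin> distorted_simplex}"
    by force
next
  fix y
  assume "y \<in> {dist q distorted_center - sqrt sq_radius | q. q \<in> lattice_points \<delta> \<and> q \<notin> distorted_simplex}"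
  then obtain q where q: "y = dist q distorted_center - sqrt sq_radius"
    "q \<in> lattice_points \<delta>" "q \<notin> distorted_simplex"
    by blast
  then obtain x where x: "x \<in> int_vecs" "q = diag_distortion \<delta> x"
    unfolding lattice_points_def by blast
  then have "sq_radius + sq_gap \<le> (dist q distorted_center)\<^sup>2"
    using q(3) mem_distorted_simplex_iff dist_distorted_center_lattice_point_ge by simp
  then have "sqrt (sq_radius + sq_gap) \<le> dist q distorted_center"
    using real_sqrt_le_mono by fastforce
  then show "sqrt (sq_radius + sq_gap) - sqrt sq_radius \<le> y"
    using q(1) by simp
qed

end

lemma sqrt_mult_eq:
  assumes "0 < \<delta>" "0 < c"
  shows "\<delta> * sqrt c = sqrt (\<delta>\<^sup>2 * c)"
  using assms by (simp add: real_sqrt_mult)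

lemma inverse_sqrt_less_iff:
  assumes "0 < \<delta>" "0 < c"
  shows "1 / sqrt c < \<delta> \<longleftrightarrow> 1 < \<delta>\<^sup>2 * c"
proof -
  have "1 / sqrt c < \<delta> \<longleftrightarrow> 1 < \<delta> * sqrt c"
    using assms by (simp add: divide_less_eq mult.commute)
  then show ?thesis
    unfolding sqrt_mult_eq[OF assms] by (metis real_sqrt_less_iff real_sqrt_one)
qed

lemma eq_inverse_sqrt_iff:
  assumes "0 < \<delta>" "0 < c"
  shows "\<delta> = 1 / sqrt c \<longleftrightarrow> \<delta>\<^sup>2 * c = 1"
proof -
  have "\<delta> = 1 / sqrt c \<longleftrightarrow> \<delta> * sqrt c = 1"
    using assms by (auto simp: field_simps)
  then show ?thesis
    unfolding sqrt_mult_eq[OF assms] by simp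
qed

lemma protection_gap_cases:
  assumes "0 < d"
  shows "protection_gap \<delta> d = (if 1 \<le> \<delta>\<^sup>2 * (d + 1) then 2 * (1 - \<delta>\<^sup>2) / d else 2 * \<delta>\<^sup>2)"
proof -
  have le: "(1 - \<delta>\<^sup>2) / d \<le> \<delta>\<^sup>2 \<longleftrightarrow> 1 \<le> \<delta>\<^sup>2 * (d + 1)"
    using assms by (simp add: divide_le_eq algebra_simps)
  show ?thesis
  proof (cases "1 \<le> \<delta>\<^sup>2 * (d + 1)")
    case True
    then have "(1 - \<delta>\<^sup>2) / d \<le> \<delta>\<^sup>2"
      using le by simp
    then show ?thesis
      using True by (simp add: protection_gap_def min_absorb2)
  next
    case False
    then have "\<delta>\<^sup>2 \<le> (1 - \<delta>\<^sup>2) / d"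
      using le by simp
    then show ?thesis
      using False by (simp add: protection_gap_def min_absorb1)
  qed
qed

lemma sqrt_add_ratio:
  assumes "0 < r"
  shows "(sqrt (r + f) - sqrt r) / sqrt r = sqrt ((r + f) / r) - 1"
  using assms by (simp add: diff_divide_distrib real_sqrt_divide)

lemma delaunay_numerator_pos:
  fixes \<delta> d :: real
  assumes "2 \<le> d"
  shows "0 < \<delta>^4 * (d^2 - 1) + \<delta>^2 * (d^2 + 2) + d^2 - 1"
proof -
  have "3 \<le> d^2 - 1"
    using assms power_mono[of 2 d 2] by simp
  moreover have "0 \<le> \<delta>^4 * (d^2 - 1)" "0 \<le> \<delta>^2 * (d^2 + 2)"
    using \<open>3 \<le> d^2 - 1\<close> by simp_all
  ultimately show ?thesis
    by linarith
qed

lemma protection_ratio_eq_sqrt: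
  fixes \<delta> d :: real
  assumes "2 \<le> d"
  defines "N \<equiv> \<delta>^4 * (d^2 - 1) + \<delta>^2 * (d^2 + 2) + d^2 - 1"
  shows "(sqrt (delaunay_sq_radius \<delta> d + protection_gap \<delta> d) - sqrt (delaunay_sq_radius \<delta> d))
           / sqrt (delaunay_sq_radius \<delta> d) = sqrt ((N + 12 * d * protection_gap \<delta> d) / N) - 1"
proof -
  have N_pos: "0 < N" and d_pos: "0 < d"
    using delaunay_numerator_pos[OF assms(1)] assms(1) by (simp_all add: N_def)
  have R2: "delaunay_sq_radius \<delta> d = N / (12 * d)"
    by (simp add: delaunay_sq_radius_def N_def)
  have "(delaunay_sq_radius \<delta> d + protection_gap \<delta> d) / delaunay_sq_radius \<delta> d
      = (N + 12 * d * protection_gap \<delta> d) / N"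
    unfolding R2 using N_pos d_pos by (simp add: field_simps)
  moreover have "0 < delaunay_sq_radius \<delta> d"
    unfolding R2 using N_pos d_pos by simp
  ultimately show ?thesis
    using sqrt_add_ratio by simp
qed

lemma protection_ratio_at_threshold:
  fixes \<delta> d :: real
  assumes "0 < d" and eq: "\<delta>\<^sup>2 * (d + 1) = 1"
  defines "N \<equiv> \<delta>^4 * (d^2 - 1) + \<delta>^2 * (d^2 + 2) + d^2 - 1"
  shows "(N + 12 * d * protection_gap \<delta> d) / N = (d^2 + 2*d + 24) / (d^2 + 2*d)"
proof -
  have eq4: "\<delta>^4 * (d + 1)\<^sup>2 = 1"
    using eq by (metis power_mult_distrib power2_eq_square power4_eq_xxxx one_power2 mult.assoc)
  have "N * (d + 1)
      = (\<delta>^4 * (d + 1)\<^sup>2) * (d - 1) + (\<delta>\<^sup>2 * (d + 1)) * (d\<^sup>2 + 2) + (d\<^sup>2 - 1) * (d + 1)"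
    unfolding N_def by (simp add: power2_eq_square algebra_simps)
  also have "\<dots> = d\<^sup>2 * (d + 2)"
    unfolding eq4 eq by (simp add: power2_eq_square algebra_simps)
  finally have N_eq: "N = d\<^sup>2 * (d + 2) / (d + 1)"
    using assms(1) by (simp add: eq_divide_eq)
  have "12 * d * protection_gap \<delta> d = 24 * (1 - \<delta>\<^sup>2)"
    using assms(1) eq by (simp add: protection_gap_cases)
  also have "\<dots> = 24 * d / (d + 1)"
    using assms(1) eq by (simp add: field_simps)
  finally have F_eq: "12 * d * protection_gap \<delta> d = 24 * d / (d + 1)" .
  have "(N + 12 * d * protection_gap \<delta> d) / N
      = (d\<^sup>2 * (d + 2) / (d + 1) + 24 * d / (d + 1)) / (d\<^sup>2 * (d + 2) / (d + 1))"
    unfolding N_eq F_eq ..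
  also have "\<dots> = (d\<^sup>2 * (d + 2) + 24 * d) / (d\<^sup>2 * (d + 2))"
    using assms(1) by (simp add: add_divide_distrib[symmetric])
  also have "\<dots> = (d * (d^2 + 2*d + 24)) / (d * (d^2 + 2*d))"
    by (simp add: power2_eq_square algebra_simps)
  also have "\<dots> = (d^2 + 2*d + 24) / (d^2 + 2*d)"
    using assms(1) by (intro mult_divide_mult_cancel_left) simp
  finally show ?thesis .
qed

lemma protection_ratio:
  fixes \<delta> d :: real
  assumes "2 \<le> d" "0 < \<delta>"
  defines "N \<equiv> \<delta>^4 * (d^2 - 1) + \<delta>^2 * (d^2 + 2) + d^2 - 1"
  shows "(sqrt (delaunay_sq_radius \<delta> d + protection_gap \<delta> d) - sqrt (delaunay_sq_radius \<delta> d))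
           / sqrt (delaunay_sq_radius \<delta> d) =
      (if 1 / sqrt (d + 1) < \<delta> then
         sqrt ((\<delta>^4 * (d^2 - 1) + \<delta>^2 * (d^2 - 22) + d^2 + 23) / N) - 1
       else if \<delta> = 1 / sqrt (d + 1) then
         sqrt ((d^2 + 2*d + 24) / (d^2 + 2*d)) - 1
       else
         sqrt ((\<delta>^4 * (d^2 - 1) + \<delta>^2 * (d^2 + 24*d + 2) + d^2 - 1) / N) - 1)"
proof -
  have d_pos: "0 < d"
    using assms(1) by simp
  have conds: "1 / sqrt (d + 1) < \<delta> \<longleftrightarrow> 1 < \<delta>\<^sup>2 * (d + 1)"
              "\<delta> = 1 / sqrt (d + 1) \<longleftrightarrow> \<delta>\<^sup>2 * (d + 1) = 1"
    using inverse_sqrt_less_iff eq_inverse_sqrt_iff assms(2) d_pos by simp_all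
  consider (gt) "1 < \<delta>\<^sup>2 * (d + 1)" | (eq) "\<delta>\<^sup>2 * (d + 1) = 1" | (lt) "\<delta>\<^sup>2 * (d + 1) < 1"
    by linarith
  then show ?thesis
  proof cases
    case gt
    then have "N + 12 * d * protection_gap \<delta> d = \<delta>^4 * (d^2 - 1) + \<delta>^2 * (d^2 - 22) + d^2 + 23"
      unfolding N_def using d_pos by (simp add: protection_gap_cases field_simps)
    then show ?thesis
      using protection_ratio_eq_sqrt[OF assms(1)] gt conds by (simp add: N_def)
  next
    case eq
    then show ?thesis
      using protection_ratio_eq_sqrt[OF assms(1)] protection_ratio_at_threshold[OF d_pos eq] conds
      by (simp add: N_def)
  next
    case lt
    then have "N + 12 * d * protection_gap \<delta> d = \<delta>^4 * (d^2 - 1) + \<delta>^2 * (d^2 + 24*d + 2) + d^2 - 1"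
      unfolding N_def using d_pos by (simp add: protection_gap_cases field_simps)
    then show ?thesis
      using protection_ratio_eq_sqrt[OF assms(1)] lt conds by (simp add: N_def)
  qed
qed

lemma ex_cube_chain: "\<exists>S::(real^'n) set. cube_chain S"
proof -
  obtain h where h: "bij_betw h (UNIV::'n set) {0..<CARD('n)}"
    using ex_bij_betw_finite_nat[of "UNIV::'n set"] by auto
  define step :: "nat \<Rightarrow> real^'n" where "step k = (\<chi> i. if h i < k then 1 else 0)" for k
  have step_nth: "step k $ i = (if h i < k then 1 else 0)" for k i
    by (simp add: step_def)
  have "inj_on step {0..CARD('n)}"
  proof (rule inj_onI)
    fix k l assume kl: "k \<in> {0..CARD('n)}" "l \<in> {0..CARD('n)}" "step k = step l"
    show "k = l"
    proof (rule ccontr)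
      assume "k \<noteq> l"
      then have "min k l \<in> {0..<CARD('n)}"
        using kl(1,2) by auto
      then obtain i where "h i = min k l"
        using h unfolding bij_betw_def by (metis imageE)
      then have "step k $ i \<noteq> step l $ i"
        using \<open>k \<noteq> l\<close> by (auto simp: step_nth min_def)
      then show False
        using kl(3) by simp
    qed
  qed
  then have "cube_chain (step ` {0..CARD('n)})"
    by unfold_locales
      (auto simp: card_image cube_vertices_def comp_le_def step_nth linorder_le_cases)
  then show ?thesis ..
qed

lemma delaunay_simplicesE:
  assumes "\<tau> \<in> (delaunay_simplices \<delta> :: (real^'n) set set)"
  obtains S z where "cube_chain S" "z \<in> int_vecs" "\<tau> = diag_distortion \<delta> ` (\<lambda>p. z + p) ` S"
proof -
  obtain \<sigma> where \<sigma>: "\<sigma> \<in> freudenthal_simplices" "\<tau> = diag_distortion \<delta> ` \<sigma>"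
    using assms unfolding delaunay_simplices_def by blast
  then obtain z S where "\<sigma> = (\<lambda>p. z + p) ` S" "z \<in> int_vecs" "cube_chain S"
    unfolding freudenthal_simplices_def cube_chain_def by blast
  then show thesis
    using that \<sigma>(2) by blast
qed

lemma delaunay_simplex_radius_protection:
  fixes \<delta> :: real
  assumes "2 \<le> CARD('n)" "0 < \<delta>" "\<delta> \<le> 1" "\<tau> \<in> (delaunay_simplices \<delta> :: (real^'n) set set)"
  shows "circumradius \<tau> = sqrt (delaunay_sq_radius \<delta> (real CARD('n)))"
    and "simplex_protection \<delta> \<tau>
           = sqrt (delaunay_sq_radius \<delta> (real CARD('n)) + protection_gap \<delta> (real CARD('n)))
                                   - sqrt (delaunay_sq_radius \<delta> (real CARD('n)))"
proof -
  obtain S z where S: "cube_chain S" "z \<in> int_vecs" "\<tau> = diag_distortion \<delta> ` (\<lambda>p. z + p) ` S"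
    using assms(4) by (rule delaunay_simplicesE)
  interpret distorted_chain S \<delta> z "(1 - \<delta>\<^sup>2) / real CARD('n)" "delaunay_sq_radius \<delta> (real CARD('n))"
      "protection_gap \<delta> (real CARD('n))"
    using S(1,2) assms(2,3) by unfold_locales (simp_all add: cube_chain_def)
  show "circumradius \<tau> = sqrt (delaunay_sq_radius \<delta> (real CARD('n)))"
    using circumradius_distorted_simplex S(3) by (simp add: distorted_simplex_def)
  show "simplex_protection \<delta> \<tau>
      = sqrt (delaunay_sq_radius \<delta> (real CARD('n)) + protection_gap \<delta> (real CARD('n)))
                                   - sqrt (delaunay_sq_radius \<delta> (real CARD('n)))"
    using simplex_protection_distorted_simplex[OF assms(1)] S(3) by (simp add: distorted_simplex_def)
qed

lemma lattice_protection_eq: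
  fixes \<delta> :: real
  assumes "2 \<le> CARD('n)" "0 < \<delta>" "\<delta> \<le> 1"
  shows "lattice_protection \<delta> TYPE('n::finite)
           = sqrt (delaunay_sq_radius \<delta> (real CARD('n)) + protection_gap \<delta> (real CARD('n)))
                                         - sqrt (delaunay_sq_radius \<delta> (real CARD('n)))"
proof -
  obtain S :: "(real^'n) set" where "cube_chain S"
    using ex_cube_chain by blast
  then have "(\<lambda>p. 0 + p) ` S \<in> freudenthal_simplices"
    unfolding freudenthal_simplices_def cube_chain_def
    by (intro CollectI exI[of _ 0] exI[of _ S]) (simp add: int_vecs_def)
  then have "diag_distortion \<delta> ` (\<lambda>p. 0 + p) ` S \<in> (delaunay_simplices \<delta> :: (real^'n) set set)"
    unfolding delaunay_simplices_def by (rule imageI)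
  then have "(delaunay_simplices \<delta> :: (real^'n) set set) \<noteq> {}"
    by blast
  then show ?thesis
    unfolding lattice_protection_def
    using delaunay_simplex_radius_protection(2)[OF assms] by (simp add: cINF_const)
qed

theorem theorem4:
  fixes \<delta> :: real
  assumes "CARD('n) \<ge> 2" and "0 < \<delta>" and "\<delta> \<le> 1"
  defines "d \<equiv> real CARD('n)"
  defines "N \<equiv> \<delta>^4 * (d^2 - 1) + \<delta>^2 * (d^2 + 2) + d^2 - 1"
  defines "R \<equiv> sqrt (N / (12 * d))"
  shows "(\<forall>\<tau> \<in> (delaunay_simplices \<delta> :: (real^'n) set set). circumradius \<tau> = R)
    \<and> lattice_protection \<delta> TYPE('n) / R =
      (if 1 / sqrt (d + 1) < \<delta> then
         sqrt ((\<delta>^4 * (d^2 - 1) + \<delta>^2 * (d^2 - 22) + d^2 + 23) / N) - 1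
       else if \<delta> = 1 / sqrt (d + 1) then
         sqrt ((d^2 + 2*d + 24) / (d^2 + 2*d)) - 1
       else
         sqrt ((\<delta>^4 * (d^2 - 1) + \<delta>^2 * (d^2 + 24*d + 2) + d^2 - 1) / N) - 1)"
proof -
  have R: "R = sqrt (delaunay_sq_radius \<delta> d)"
    by (simp add: R_def N_def delaunay_sq_radius_def)
  have "2 \<le> d"
    using assms(1) by (simp add: d_def)
  then show ?thesis
    using delaunay_simplex_radius_protection(1)[OF assms(1-3)] lattice_protection_eq[OF assms(1-3)]
      protection_ratio[OF _ assms(2), of d]
    unfolding R N_def d_def by simp
qed

end
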